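(* Let $q$ be a prime power, $m$ a positive integer with $\gcd(m,q)=1$, $\lambda\in\mathbb{F}_q^*$, and $R_\lambda=\mathbb{F}_q[x]/\langle x^m-\lambda\rangle$. Let $C$ and $D$ be $\lambda$-quasi-twisted codes over $\mathbb{F}_q$ of length $2m$ and index $2$ (viewed as $R_\lambda$-submodules of $R_\lambda^2$), with $C$ generated by $(g_{11}(x),g_{12}(x))$ and $(0,g_{22}(x))$, and $D$ generated by $(f_{11}(x),f_{12}(x))$ and $(0,f_{22}(x))$, where $g_{11}(x)\mid x^m-\lambda$, $g_{22}(x)\mid x^m-\lambda$, $\deg g_{12}(x)<\deg g_{22}(x)$, $g_{11}(x)g_{22}(x)\mid (x^m-\lambda)g_{12}(x)$, and likewise $f_{11}(x)\mid x^m-\lambda$, $f_{22}(x)\mid x^m-\lambda$, $\deg f_{12}(x)<\deg f_{22}(x)$, $f_{11}(x)f_{22}(x)\mid (x^m-\lambda)f_{12}(x)$. Let $g(x)=\gcd(g_{11}(x),g_{22}(x))$, $f(x)=\gcd(f_{11}(x),f_{22}(x))$, and write $g_{22}(x)=g(x)g_{22}'(x)$, $f_{22}(x)=f(x)f_{22}'(x)$. Then $(C,D)$ is a linear complementary pair of codes if and only if: (I) $\gcd(f_{11}(x),g_{11}(x))=1$; (II) $g(x)=\dfrac{x^m-\lambda}{\mathrm{lcm}(f_{11}(x),f_{22}(x))}$; (III) $f(x)=\dfrac{x^m-\lambda}{\mathrm{lcm}(g_{11}(x),g_{22}(x))}$; (IV) $\gcd\big(g_{22}'(x),f_{22}'(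x),\,g_{11}(x)f_{12}(x)-g_{12}(x)f_{11}(x)\big)=1$.
   Context: A pair $(C,D)$ of $\mathbb{F}_q$-linear codes of the same length $n$ is a linear complementary pair (LCP) of codes if $C\cap D=\{0\}$ and $C+D=\mathbb{F}_q^n$. For $\lambda\in\mathbb{F}_q^*$, $T_\lambda(x_0,\dots,x_{n-1})=(\lambda x_{n-1},x_0,\dots,x_{n-2})$; a linear code $C\subseteq\mathbb{F}_q^{2m}$ is $\lambda$-quasi-twisted of index $2$ if $T_\lambda^2(C)\subseteq C$, and it is identified with an $R_\lambda$-submodule of $R_\lambda^2$ via $(c_{0,0},c_{0,1},\dots,c_{m-1,0},c_{m-1,1})\mapsto(c_0(x),c_1(x))$, $c_j(x)=\sum_i c_{i,j}x^i$. gcd and lcm are monic. *)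

theory Defs
  imports "HOL-Computational_Algebra.Computational_Algebra"
begin

definition xml :: "nat \<Rightarrow> 'a::field \<Rightarrow> 'a poly" where
  "xml m lam = monom 1 m - [:lam:]"

text \<open>The R_lambda-submodule of R_lambda^2 generated by (a1,a2) and (0,b2);
  elements of R_lambda are represented by their reduced representatives mod x^m - lambda.\<close>
definition qt_module :: "nat \<Rightarrow> 'a::field \<Rightarrow> 'a poly \<Rightarrow> 'a poly \<Rightarrow> 'a poly \<Rightarrow> ('a poly \<times> 'a poly) set" where
  "qt_module m lam a1 a2 b2 =
     {((r * a1) mod xml m lam, (r * a2 + s * b2) mod xml m lam) | r s. True}"

text \<open>Identification (c0(x),c1(x)) with (c00,c01,c10,c11,...,c(m-1)0,c(m-1)1) in F_q^(2m).\<close>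
definition to_vec :: "nat \<Rightarrow> ('a::zero poly \<times> 'a poly) \<Rightarrow> 'a list" where
  "to_vec m c = map (\<lambda>k. coeff (if even k then fst c else snd c) (k div 2)) [0..<2*m]"

definition qt_code :: "nat \<Rightarrow> 'a::field \<Rightarrow> 'a poly \<Rightarrow> 'a poly \<Rightarrow> 'a poly \<Rightarrow> 'a list set" where
  "qt_code m lam a1 a2 b2 = to_vec m ` qt_module m lam a1 a2 b2"

definition is_LCP :: "nat \<Rightarrow> 'a::field list set \<Rightarrow> 'a list set \<Rightarrow> bool" where
  "is_LCP n C D \<longleftrightarrow> C \<inter> D = {replicate n 0} \<and>
     {map2 (+) u v | u v. u \<in> C \<and> v \<in> D} = {v. length v = n}"

end

theory Submission
  imports Defs "HOL-Library.Product_Plus" "HOL-Library.Set_Algebras"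
begin

(* Write (a, b), (0, c) for the generators of C and (d, e), (0, h) for those of D, and
  M = x^m - lambda. Since m is invertible in F_q and lambda is nonzero, M is coprime to its
  derivative m x^(m-1) and hence squarefree.

  A code of this shape has q^(2 deg M - deg a - deg c) elements, so (C, D) is an LCP iff
  C \<inter> D = 0 and deg a + deg c + deg d + deg h = 2 deg M. The intersection is trivial iff every
  relation r (a, b) + s (0, c) = u (d, e) + v (0, h) between the unreduced generators vanishes
  modulo M, and because M is squarefree this can be tested one prime p | M at a time.
  Conditions (I)-(IV) say precisely that at each such p the reductions of C and D have
  complementary dimensions and meet trivially; moreover (II) and (III) mean
  gcd(a, c) lcm(d, h) = M = gcd(d, h) lcm(a, c), which gives the degree count.

  Conversely, decomposing (1, 0) and (0, 1) along C + D yields (I) and the coprimality of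
  gcd(a, c) with d h and of gcd(d, h) with a c, so gcd(a, c) lcm(d, h) divides M, with equality
  by the degree count: this is (II) and (III). Finally, if t divides both cofactors
  c / gcd(a, c), h / gcd(d, h) and a e - b d, then with N = M / t a Bezout combination of c and h
  turns r = d N, u = a N into a relation, so M divides a d N and t is a unit: this is (IV). *)

section \<open>The modulus x^m - \<lambda>\<close>

lemma of_nat_card_eq_0: "(of_nat (card (UNIV :: 'a::{finite,ring_1} set)) :: 'a) = 0"
proof -
  have "(\<Sum>x\<in>(UNIV :: 'a set). x + 1) = (\<Sum>x\<in>UNIV. x)"
    by (rule sum.reindex_bij_witness[of _ "\<lambda>x. x - 1" "\<lambda>x. x + 1"]) auto
  then show ?thesis
    by (simp add: sum.distrib)
qed

lemma of_nat_neq_0_if_coprime_card: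
  assumes "coprime m (card (UNIV :: 'a::{finite,field} set))"
  shows "(of_nat m :: 'a) \<noteq> 0"
proof
  assume "(of_nat m :: 'a) = 0"
  then have "CHAR('a) dvd m"
    by (simp add: of_nat_eq_0_iff_char_dvd)
  moreover have "CHAR('a) dvd card (UNIV :: 'a set)"
    using of_nat_card_eq_0[where 'a='a] by (simp add: of_nat_eq_0_iff_char_dvd)
  ultimately have "CHAR('a) dvd 1"
    using assms coprime_common_divisor by blast
  then show False
    by simp
qed

lemma degree_xml: "m > 0 \<Longrightarrow> degree (xml m lam) = m"
  unfolding xml_def diff_conv_add_uminus
  by (subst degree_add_eq_left) (auto simp: degree_monom_eq)

lemma xml_neq_0: "m > 0 \<Longrightarrow> xml m lam \<noteq> 0"
  using degree_xml[of m lam] by auto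

lemma normalize_xml: "m > 0 \<Longrightarrow> normalize (xml m (lam::'a::field_gcd)) = xml m lam"
  by (cases m) (simp_all add: normalize_poly_eq_map_poly degree_xml, simp add: xml_def)

lemma squarefree_xml:
  assumes "m > 0" "(of_nat m :: 'a::field_gcd) \<noteq> 0" "lam \<noteq> (0::'a)"
  shows "squarefree (xml m lam)"
proof (rule squarefreeI)
  fix t :: "'a poly"
  assume "t ^ 2 dvd xml m lam"
  then obtain k where k: "xml m lam = t * (t * k)"
    unfolding power2_eq_square by (metis dvdE mult.assoc)
  have "pderiv (xml m lam) = monom (of_nat m) (m - 1)"
    by (simp add: xml_def pderiv_diff pderiv_monom pderiv_pCons)
  moreover have "pderiv (xml m lam) = t * (t * pderiv k + k * pderiv t) + t * k * pderiv t"
    unfolding k pderiv_mult by (simp add: algebra_simps)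
  ultimately have "t dvd monom (of_nat m) (m - 1)"
    by (metis dvd_add dvd_triv_left mult.assoc)
  then have "t dvd smult (inverse (of_nat m)) (monom 1 1 * monom (of_nat m) (m - 1))"
    by (simp add: dvd_smult)
  also have "smult (inverse (of_nat m)) (monom 1 1 * monom (of_nat m) (m - 1)) = monom (1::'a) m"
    using assms(1,2) by (simp add: mult_monom smult_monom)
  finally have "t dvd monom 1 m - xml m lam"
    using k by (simp add: dvd_diff)
  then have "t dvd [:lam:]"
    by (simp add: xml_def)
  then show "t dvd 1"
    using assms(3) by (simp add: is_unit_const_poly_iff dvd_field_iff dvd_unit_imp_unit)
qed

section \<open>Squarefree moduli, gcd and lcm\<close>

lemma squarefree_dvd_cancel_square:
  fixes M :: "'a::factorial_semiring"
  assumes "squarefree M" "t dvd M" "t * t dvd M * b"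
  shows "t dvd b"
proof (cases "b = 0")
  case False
  have "M \<noteq> 0" "t \<noteq> 0"
    using assms(1,2) by auto
  show ?thesis
  proof (rule multiplicity_le_imp_dvd[OF \<open>t \<noteq> 0\<close>])
    fix p :: 'a
    assume p: "prime p"
    have "multiplicity p M \<le> 1"
      using assms(1) \<open>M \<noteq> 0\<close> p squarefree_factorial_semiring'' by blast
    moreover have "multiplicity p t \<le> multiplicity p M"
      using assms(2) \<open>M \<noteq> 0\<close> by (rule dvd_imp_multiplicity_le)
    moreover have "multiplicity p (t * t) \<le> multiplicity p (M * b)"
      using assms(3) \<open>M \<noteq> 0\<close> False by (intro dvd_imp_multiplicity_le) simp_all
    ultimately show "multiplicity p t \<le> multiplicity p b"
      using p \<open>M \<noteq> 0\<close> \<open>t \<noteq> 0\<close> False by (simp add: prime_elem_multiplicity_mult_distrib)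
  qed
qed simp

lemma squarefree_dvdI_primes:
  fixes M :: "'a::factorial_semiring"
  assumes "squarefree M" "\<And>p. prime p \<Longrightarrow> p dvd M \<Longrightarrow> p dvd x"
  shows "M dvd x"
proof (cases "x = 0")
  case False
  have "M \<noteq> 0"
    using assms(1) by auto
  show ?thesis
  proof (rule multiplicity_le_imp_dvd[OF \<open>M \<noteq> 0\<close>])
    fix p :: 'a
    assume p: "prime p"
    have "multiplicity p M \<le> 1"
      using assms(1) \<open>M \<noteq> 0\<close> p squarefree_factorial_semiring'' by blast
    moreover have "multiplicity p x > 0" if "p dvd M"
      using assms(2)[OF p that] p False by (simp add: prime_multiplicity_gt_zero_iff)
    ultimately show "multiplicity p M \<le> multiplicity p x"
      by (cases "p dvd M") (auto simp: not_dvd_imp_multiplicity_0)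
  qed
qed simp

lemma coprime_div_gcd_if_squarefree:
  fixes M :: "'a::{factorial_semiring,semiring_gcd}"
  assumes "squarefree M" "c dvd M"
  shows "coprime (c div gcd a c) a"
proof (rule coprimeI)
  fix z
  assume z: "z dvd c div gcd a c" "z dvd a"
  have c: "gcd a c * (c div gcd a c) = c"
    by simp
  then have "z dvd gcd a c"
    using z by (metis dvd_mult dvd_trans gcd_greatest)
  then have "z * z dvd M * 1"
    using z(1) c assms(2) by (metis mult_dvd_mono dvd_trans mult_1_right)
  moreover have "z dvd M"
    using \<open>z dvd gcd a c\<close> assms(2) by (meson dvd_trans gcd_dvd2)
  ultimately show "is_unit z"
    using assms(1) squarefree_dvd_cancel_square by blast
qed

lemma degree_normalize: "degree (normalize (p :: 'a::field_gcd poly)) = degree p"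
  by (cases "p = 0") (simp_all add: le_antisym dvd_imp_degree_le)

lemma degree_gcd_add_degree_lcm:
  fixes a c :: "'a::field_gcd poly"
  assumes "a \<noteq> 0" "c \<noteq> 0"
  shows "degree (gcd a c) + degree (lcm a c) = degree a + degree c"
proof -
  have "gcd a c \<noteq> 0" "lcm a c \<noteq> 0"
    using assms by (auto simp: lcm_eq_0_iff)
  then have "degree (gcd a c) + degree (lcm a c) = degree (normalize a * normalize c)"
    by (simp add: degree_mult_eq flip: gcd_mult_lcm)
  also have "\<dots> = degree a + degree c"
    using assms by (simp add: degree_mult_eq degree_normalize)
  finally show ?thesis .
qed

lemma normalized_eq_if_dvd_degree_eq:
  fixes x y :: "'a::field_gcd poly"
  assumes "x dvd y" "y \<noteq> 0" "degree x = degree y" "normalize x = x" "normalize y = y"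
  shows "x = y"
proof -
  obtain k where k: "y = x * k"
    using assms(1) by blast
  with assms(2,3) have "is_unit k"
    by (auto simp: degree_mult_eq is_unit_iff_degree)
  then have "y dvd x"
    using k by simp
  then show ?thesis
    using assms associated_eqI by blast
qed

section \<open>Reduced residues as coordinate vectors\<close>

definition polys_below :: "nat \<Rightarrow> 'a::zero poly set" where
  "polys_below n = {p. \<forall>i\<ge>n. coeff p i = 0}"

lemma mem_polys_below_iff: "p \<in> polys_below n \<longleftrightarrow> p = 0 \<or> degree p < n"
proof
  assume "p \<in> polys_below n"
  then have "coeff p i = 0" if "i \<ge> n" for i
    using that by (simp add: polys_below_def)
  then show "p = 0 \<or> degree p < n"
    by (metis leading_coeff_0_iff not_le)
qed (auto simp: polys_below_def coeff_eq_0)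

lemma polys_below_0 [simp]: "polys_below 0 = {0}"
  by (auto simp: mem_polys_below_iff)

lemma zero_mem_polys_below [simp]: "0 \<in> polys_below n"
  by (simp add: polys_below_def)

lemma polys_below_Suc: "polys_below (Suc n) = (\<lambda>(c, p). pCons c p) ` (UNIV \<times> polys_below n)"
proof (intro set_eqI iffI)
  fix q :: "'a poly"
  assume q: "q \<in> polys_below (Suc n)"
  obtain c p where "q = pCons c p"
    by (cases q)
  moreover have "p \<in> polys_below n"
    using q unfolding polys_below_def \<open>q = pCons c p\<close> by (auto dest: spec[of _ "Suc _"])
  ultimately show "q \<in> (\<lambda>(c, p). pCons c p) ` (UNIV \<times> polys_below n)"
    by auto
qed (auto simp: polys_below_def coeff_pCons split: nat.split)

lemma card_polys_below:
  "card (polys_below n :: 'a::{finite,zero} poly set) = card (UNIV :: 'a set) ^ n"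
proof (induction n)
  case 0
  show ?case
    by simp
next
  case (Suc n)
  have "inj_on (\<lambda>(c, p). pCons c p) (UNIV \<times> (polys_below n :: 'a poly set))"
    by (auto simp: inj_on_def)
  then show ?case
    unfolding polys_below_Suc using Suc by (simp add: card_image card_cartesian_product)
qed

lemma finite_polys_below: "finite (polys_below n :: 'a::{finite,zero} poly set)"
  by (induction n) (simp_all add: polys_below_Suc mem_polys_below_iff)

lemma add_mem_polys_below: "p \<in> polys_below n \<Longrightarrow> q \<in> polys_below n \<Longrightarrow> p + q \<in> polys_below n"
  by (simp add: polys_below_def)

lemma diff_mem_polys_below:
  "p \<in> polys_below n \<Longrightarrow> q \<in> polys_below n \<Longrightarrow> p - q \<in> polys_below n"
  by (simp add: polys_below_def)

lemma mult_mem_polys_below: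
  fixes p q :: "'a::idom poly"
  shows "p \<in> polys_below n \<Longrightarrow> p * q \<in> polys_below (n + degree q)"
  by (cases "p = 0 \<or> q = 0") (auto simp: mem_polys_below_iff degree_mult_eq)

lemma mod_mem_polys_below: "M \<noteq> 0 \<Longrightarrow> (p :: 'a::field poly) mod M \<in> polys_below (degree M)"
  using degree_mod_less[of M p] by (auto simp: mem_polys_below_iff)

lemma mod_eq_self_if_polys_below: "(p :: 'a::field poly) \<in> polys_below (degree M) \<Longrightarrow> p mod M = p"
  by (auto simp: mem_polys_below_iff mod_poly_less)

lemma dvd_polys_below_imp_eq_0:
  fixes p M :: "'a::field poly"
  assumes "M dvd p" "p \<in> polys_below (degree M)" "M \<noteq> 0"
  shows "p = 0"
  using assms dvd_imp_degree_le by (force simp: mem_polys_below_iff)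

lemma to_vec_add: "to_vec m (x + y) = map2 (+) (to_vec m x) (to_vec m y)"
  by (rule nth_equalityI) (simp_all add: to_vec_def)

lemma to_vec_0: "to_vec m 0 = replicate (2 * m) 0"
  by (rule nth_equalityI) (simp_all add: to_vec_def)

lemma length_to_vec [simp]: "length (to_vec m c) = 2 * m"
  by (simp add: to_vec_def)

lemma inj_on_to_vec: "inj_on (to_vec m) (polys_below m \<times> polys_below m)"
proof (rule inj_onI, clarify)
  fix x y x' y' :: "'a poly"
  assume below: "x \<in> polys_below m" "y \<in> polys_below m" "x' \<in> polys_below m" "y' \<in> polys_below m"
    and eq: "to_vec m (x, y) = to_vec m (x', y')"
  have "coeff x i = coeff x' i \<and> coeff y i = coeff y' i" for i
  proof (cases "i < m")
    case True
    then have "to_vec m (x, y) ! (2 * i) = to_vec m (x', y') ! (2 * i)"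
      and "to_vec m (x, y) ! (2 * i + 1) = to_vec m (x', y') ! (2 * i + 1)"
      using eq by simp_all
    with True show ?thesis
      by (simp add: to_vec_def)
  qed (use below in \<open>simp add: polys_below_def\<close>)
  then show "x = x' \<and> y = y'"
    by (simp add: poly_eqI)
qed

lemma to_vec_image_polys_below:
  "to_vec m ` (polys_below m \<times> polys_below m) = {v :: 'a::{finite,zero} list. length v = 2 * m}"
proof (rule card_subset_eq)
  show "finite {v :: 'a list. length v = 2 * m}"
    using finite_lists_length_eq[of "UNIV :: 'a set" "2 * m"] by simp
  have "card (to_vec m ` (polys_below m \<times> polys_below m :: ('a poly \<times> 'a poly) set)) =
      card (UNIV :: 'a set) ^ (2 * m)"
    by (simp add: card_image[OF inj_on_to_vec] card_cartesian_product card_polys_below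
        flip: power_add mult_2)
  also have "\<dots> = card {v :: 'a list. length v = 2 * m}"
    using card_lists_length_eq[of "UNIV :: 'a set" "2 * m"] by simp
  finally show "card (to_vec m ` (polys_below m \<times> polys_below m :: ('a poly \<times> 'a poly) set)) =
      card {v :: 'a list. length v = 2 * m}" .
qed auto

lemma card_set_plus_if_Int_zero:
  fixes A B :: "'a::ab_group_add set"
  assumes "A \<inter> B \<subseteq> {0}"
    and "\<And>x y. x \<in> A \<Longrightarrow> y \<in> A \<Longrightarrow> x - y \<in> A" "\<And>x y. x \<in> B \<Longrightarrow> y \<in> B \<Longrightarrow> x - y \<in> B"
  shows "card (A + B) = card A * card B"
proof -
  have "inj_on (\<lambda>(x, y). x + y) (A \<times> B)"
  proof (rule inj_onI, clarify)
    fix x y x' y'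
    assume mem: "x \<in> A" "y \<in> B" "x' \<in> A" "y' \<in> B" and "x + y = x' + y'"
    then have "x - x' = y' - y"
      by (simp add: algebra_simps)
    moreover have "x - x' \<in> A" "y' - y \<in> B"
      using mem assms(2,3) by blast+
    ultimately have "x - x' = 0"
      using assms(1) by auto
    with \<open>x - x' = y' - y\<close> show "x = x' \<and> y = y'"
      by simp
  qed
  then show ?thesis
    by (simp add: set_plus_image card_image card_cartesian_product)
qed

lemma set_plus_subset_polys_below:
  assumes "A \<subseteq> polys_below n \<times> polys_below n" "B \<subseteq> polys_below n \<times> polys_below n"
  shows "A + B \<subseteq> polys_below n \<times> polys_below n"
proof
  fix z
  assume "z \<in> A + B"
  then obtain x y where "z = x + y" "x \<in> A" "y \<in> B"
    by (rule set_plus_elim)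
  moreover from this(2,3) assms
  have "x \<in> polys_below n \<times> polys_below n" "y \<in> polys_below n \<times> polys_below n"
    by blast+
  ultimately show "z \<in> polys_below n \<times> polys_below n"
    by (simp add: add_mem_polys_below mem_Times_iff)
qed

lemma is_LCP_to_vec_iff:
  fixes A B :: "('a::{finite,field} poly \<times> 'a poly) set" and m :: nat
  defines "V \<equiv> polys_below m \<times> polys_below m"
  assumes "A \<subseteq> V" "B \<subseteq> V"
  shows "is_LCP (2 * m) (to_vec m ` A) (to_vec m ` B) \<longleftrightarrow> A \<inter> B = {0} \<and> A + B = V"
proof -
  have "A + B \<subseteq> V"
    using assms(2,3) unfolding V_def by (rule set_plus_subset_polys_below)
  have "to_vec m ` A \<inter> to_vec m ` B = {replicate (2 * m) 0} \<longleftrightarrow>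
      to_vec m ` (A \<inter> B) = to_vec m ` {0}"
    using inj_on_image_Int[OF inj_on_to_vec assms(2,3)[unfolded V_def]] by (simp add: to_vec_0)
  also have "\<dots> \<longleftrightarrow> A \<inter> B = {0}"
    using assms by (intro inj_on_image_eq_iff[OF inj_on_to_vec]) (auto simp: V_def zero_prod_def)
  moreover have "{map2 (+) u v | u v. u \<in> to_vec m ` A \<and> v \<in> to_vec m ` B} =
      (\<lambda>(x, y). map2 (+) (to_vec m x) (to_vec m y)) ` (A \<times> B)"
    by fastforce
  moreover have "\<dots> = to_vec m ` (A + B)"
    by (simp add: set_plus_image image_image to_vec_add case_prod_unfold)
  moreover have "to_vec m ` (A + B) = to_vec m ` V \<longleftrightarrow> A + B = V"
    using \<open>A + B \<subseteq> V\<close> by (intro inj_on_image_eq_iff[OF inj_on_to_vec]) (simp_all add: V_def)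
  ultimately show ?thesis
    by (simp add: is_LCP_def V_def to_vec_image_polys_below)
qed

section \<open>Submodules of (F[x]/M)^2 with two generators\<close>

definition qt_combination ::
    "'a::field poly \<Rightarrow> 'a poly \<Rightarrow> 'a poly \<Rightarrow> 'a poly \<Rightarrow> 'a poly \<times> 'a poly \<Rightarrow> 'a poly \<times> 'a poly" where
  "qt_combination M a b c = (\<lambda>(r, s). ((r * a) mod M, (r * b + s * c) mod M))"

definition qt_span :: "'a::field poly \<Rightarrow> 'a poly \<Rightarrow> 'a poly \<Rightarrow> 'a poly \<Rightarrow> ('a poly \<times> 'a poly) set" where
  "qt_span M a b c = range (qt_combination M a b c)"

lemma qt_module_eq_qt_span: "qt_module m lam a b c = qt_span (xml m lam) a b c"
  by (auto simp: qt_module_def qt_span_def qt_combination_def)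

lemma qt_span_subset_polys_below:
  "M \<noteq> 0 \<Longrightarrow> qt_span M a b c \<subseteq> polys_below (degree M) \<times> polys_below (degree M)"
  by (auto simp: qt_span_def qt_combination_def mod_mem_polys_below)

lemma zero_mem_qt_span: "0 \<in> qt_span M a b c"
proof -
  have "qt_combination M a b c (0, 0) = 0"
    by (simp add: qt_combination_def zero_prod_def)
  then show ?thesis
    unfolding qt_span_def by (metis rangeI)
qed

lemma diff_mem_qt_span:
  assumes "x \<in> qt_span M a b c" "y \<in> qt_span M a b c"
  shows "x - y \<in> qt_span M a b c"
proof -
  obtain r s r' s' where "x = qt_combination M a b c (r, s)" "y = qt_combination M a b c (r', s')"
    using assms by (auto simp: qt_span_def)
  then have "x - y = qt_combination M a b c (r - r', s - s')"
    by (simp add: qt_combination_def algebra_simps flip: poly_mod_diff_left)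
  then show ?thesis
    by (simp add: qt_span_def)
qed

lemma qt_combination_shift_fst:
  assumes "M = a * A" "A * b = c * w"
  shows "qt_combination M a b c (r + q * A, s) = qt_combination M a b c (r, s + q * w)"
proof -
  have "(r + q * A) * a = r * a + q * M" "(r + q * A) * b + s * c = r * b + (s + q * w) * c"
    using assms by (simp_all add: algebra_simps)
  then show ?thesis
    by (simp add: qt_combination_def)
qed

lemma qt_combination_shift_snd:
  assumes "M = c * C"
  shows "qt_combination M a b c (r, s + t * C) = qt_combination M a b c (r, s)"
proof -
  have "r * b + (s + t * C) * c = r * b + s * c + t * M"
    using assms by (simp add: algebra_simps)
  then have "(r * b + (s + t * C) * c) mod M = (r * b + s * c) mod M"
    by (simp only: mod_mult_self1)
  then show ?thesis
    by (simp add: qt_combination_def)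
qed

lemma qt_combination_reduce:
  assumes "M = a * A" "M = c * C" "A * b = c * w"
  shows "qt_combination M a b c (r, s) = qt_combination M a b c (r mod A, (s + r div A * w) mod C)"
proof -
  define t where "t = s + r div A * w"
  have "qt_combination M a b c (r, s) = qt_combination M a b c (r mod A + r div A * A, s)"
    by simp
  also have "\<dots> = qt_combination M a b c (r mod A, t)"
    unfolding t_def using assms(1,3) by (rule qt_combination_shift_fst)
  also have "\<dots> = qt_combination M a b c (r mod A, t mod C + t div C * C)"
    by simp
  also have "\<dots> = qt_combination M a b c (r mod A, t mod C)"
    using assms(2) by (rule qt_combination_shift_snd)
  finally show ?thesis
    unfolding t_def .
qed

lemma qt_span_eq_image_polys_below:
  fixes M a b c :: "'a::field poly"
  assumes "M \<noteq> 0" "a dvd M" "c dvd M" "a * c dvd M * b"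
  shows "qt_span M a b c =
    qt_combination M a b c ` (polys_below (degree M - degree a) \<times> polys_below (degree M - degree c))"
proof
  define A where "A = M div a"
  define C where "C = M div c"
  have M: "M = a * A" "M = c * C"
    unfolding A_def C_def using assms(2,3) by simp_all
  then have "a \<noteq> 0" "A \<noteq> 0" "c \<noteq> 0" "C \<noteq> 0"
    using assms(1) by auto
  then have "degree M = degree a + degree A" "degree M = degree c + degree C"
    by (metis M degree_mult_eq)+
  then have deg: "degree A = degree M - degree a" "degree C = degree M - degree c"
    by simp_all
  obtain w where "M * b = a * c * w"
    using assms(4) by blast
  then have "a * (A * b) = a * (c * w)"
    using M by (simp add: ac_simps)
  then have "A * b = c * w"
    using \<open>a \<noteq> 0\<close> by simp
  show "qt_span M a b c \<subseteq>
      qt_combination M a b c ` (polys_below (degree M - degree a) \<times> polys_below (degree M - degree c))"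
  proof
    fix x
    assume "x \<in> qt_span M a b c"
    then obtain r s where "x = qt_combination M a b c (r, s)"
      by (auto simp: qt_span_def)
    then have "x = qt_combination M a b c (r mod A, (s + r div A * w) mod C)"
      using qt_combination_reduce[OF M \<open>A * b = c * w\<close>] by simp
    moreover have "(r mod A, (s + r div A * w) mod C) \<in>
        polys_below (degree M - degree a) \<times> polys_below (degree M - degree c)"
      using mod_mem_polys_below[OF \<open>A \<noteq> 0\<close>] mod_mem_polys_below[OF \<open>C \<noteq> 0\<close>] deg by simp
    ultimately show "x \<in>
        qt_combination M a b c ` (polys_below (degree M - degree a) \<times> polys_below (degree M - degree c))"
      by blast
  qed
qed (auto simp: qt_span_def)

lemma inj_on_qt_combination:
  fixes M a b c :: "'a::field poly"
  assumes "M \<noteq> 0" "a dvd M" "c dvd M"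
  shows "inj_on (qt_combination M a b c)
    (polys_below (degree M - degree a) \<times> polys_below (degree M - degree c))"
proof (rule inj_onI, clarify)
  fix r s r' s'
  assume below: "r \<in> polys_below (degree M - degree a)" "s \<in> polys_below (degree M - degree c)"
    "r' \<in> polys_below (degree M - degree a)" "s' \<in> polys_below (degree M - degree c)"
    and eq: "qt_combination M a b c (r, s) = qt_combination M a b c (r', s')"
  have "a \<noteq> 0" "c \<noteq> 0" "degree a \<le> degree M" "degree c \<le> degree M"
    using assms dvd_imp_degree_le by auto
  have "x * y \<in> polys_below (degree M)"
    if "x \<in> polys_below (degree M - degree y)" "degree y \<le> degree M" for x y :: "'a poly"
    using mult_mem_polys_below[OF that(1), of y] that(2) by simp
  moreover have "s - s' \<in> polys_below (degree M - degree c)"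
    using below diff_mem_polys_below by blast
  ultimately have "r * a \<in> polys_below (degree M)" "r' * a \<in> polys_below (degree M)"
      and "(s - s') * c \<in> polys_below (degree M)"
    using below \<open>degree a \<le> _\<close> \<open>degree c \<le> _\<close> by blast+
  have "(r * a) mod M = (r' * a) mod M"
    using eq by (simp add: qt_combination_def)
  then have "r * a = r' * a"
    using \<open>r * a \<in> _\<close> \<open>r' * a \<in> _\<close> by (simp add: mod_eq_self_if_polys_below)
  then have "r = r'"
    using \<open>a \<noteq> 0\<close> by simp
  then have "(r * b + s * c) mod M = (r * b + s' * c) mod M"
    using eq by (simp add: qt_combination_def)
  then have "M dvd (s - s') * c"
    by (simp add: mod_eq_dvd_iff algebra_simps)
  then have "(s - s') * c = 0"
    using \<open>(s - s') * c \<in> _\<close> assms(1) by (rule dvd_polys_below_imp_eq_0)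
  then show "r = r' \<and> s = s'"
    using \<open>r = r'\<close> \<open>c \<noteq> 0\<close> by simp
qed

lemma card_qt_span:
  fixes M a b c :: "'a::{finite,field} poly"
  assumes "M \<noteq> 0" "a dvd M" "c dvd M" "a * c dvd M * b"
  shows "card (qt_span M a b c) =
    card (UNIV :: 'a set) ^ (degree M - degree a) * card (UNIV :: 'a set) ^ (degree M - degree c)"
  by (simp add: qt_span_eq_image_polys_below[OF assms]
      card_image[OF inj_on_qt_combination[OF assms(1-3)]] card_cartesian_product card_polys_below)

lemma multiples_of_modulus_in_span:
  fixes M d e h :: "'a::field poly"
  assumes "M \<noteq> 0" "d dvd M" "h dvd M" "d * h dvd M * e"
  obtains u v where "u * d = k * M" "u * e + v * h = j * M"
proof -
  define D where "D = M div d"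
  define H where "H = M div h"
  have M: "M = d * D" "M = h * H"
    unfolding D_def H_def using assms(2,3) by simp_all
  obtain w where "M * e = d * h * w"
    using assms(4) by blast
  then have "d * (D * e) = d * (h * w)"
    using M(1) by (simp add: ac_simps)
  then have De: "D * e = h * w"
    using M(1) assms(1) by simp
  have "(k * D) * d = k * M"
    using M(1) by simp
  moreover have "(k * D) * e + (j * H - k * w) * h = k * (D * e - h * w) + j * (h * H)"
    by (simp add: algebra_simps)
  then have "(k * D) * e + (j * H - k * w) * h = j * M"
    using De M(2) by simp
  ultimately show thesis
    by (rule that)
qed

lemma qt_span_Int_eq_0_iff:
  fixes M a b c d e h :: "'a::field poly"
  assumes "M \<noteq> 0" "d dvd M" "h dvd M" "d * h dvd M * e"
  shows "qt_span M a b c \<inter> qt_span M d e h = {0} \<longleftrightarrow>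
    (\<forall>r s u v. r * a = u * d \<longrightarrow> r * b + s * c = u * e + v * h \<longrightarrow> M dvd r * a \<and> M dvd r * b + s * c)"
proof (intro iffI allI impI)
  fix r s u v
  assume Int: "qt_span M a b c \<inter> qt_span M d e h = {0}"
    and eq: "r * a = u * d" "r * b + s * c = u * e + v * h"
  have "qt_combination M a b c (r, s) = qt_combination M d e h (u, v)"
    using eq by (simp add: qt_combination_def)
  then have "qt_combination M a b c (r, s) \<in> qt_span M a b c \<inter> qt_span M d e h"
    by (metis IntI qt_span_def rangeI)
  then have "qt_combination M a b c (r, s) = 0"
    using Int by blast
  then show "M dvd r * a \<and> M dvd r * b + s * c"
    by (simp add: qt_combination_def zero_prod_def dvd_eq_mod_eq_0)
next
  assume trivial: "\<forall>r s u v. r * a = u * d \<longrightarrow> r * b + s * c = u * e + v * h \<longrightarrow>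
    M dvd r * a \<and> M dvd r * b + s * c"
  have "qt_span M a b c \<inter> qt_span M d e h \<subseteq> {0}"
  proof
    fix x
    assume "x \<in> qt_span M a b c \<inter> qt_span M d e h"
    then obtain r s u v
      where x: "x = qt_combination M a b c (r, s)" "x = qt_combination M d e h (u, v)"
      unfolding qt_span_def by (metis IntE rangeE surj_pair)
    then have "M dvd r * a - u * d" "M dvd (r * b + s * c) - (u * e + v * h)"
      by (simp_all add: qt_combination_def flip: mod_eq_dvd_iff)
    then obtain k j where kj: "r * a - u * d = k * M" "(r * b + s * c) - (u * e + v * h) = j * M"
      by (metis dvd_def mult.commute)
    obtain u' v' where uv': "u' * d = k * M" "u' * e + v' * h = j * M"
      using multiples_of_modulus_in_span[OF assms] .
    have "r * a = (u + u') * d" "r * b + s * c = (u + u') * e + (v + v') * h"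
      using kj uv' by (simp_all add: algebra_simps)
    then have "M dvd r * a" "M dvd r * b + s * c"
      using trivial by blast+
    then show "x \<in> {0}"
      using x(1) by (simp add: qt_combination_def zero_prod_def dvd_eq_mod_eq_0)
  qed
  then show "qt_span M a b c \<inter> qt_span M d e h = {0}"
    using zero_mem_qt_span by blast
qed

lemma mem_qt_span_plus_qt_spanE:
  fixes M a b c d e h :: "'a::field poly"
  assumes "(p mod M, q mod M) \<in> qt_span M a b c + qt_span M d e h"
  obtains r s u v where "M dvd r * a + u * d - p" "M dvd r * b + s * c + u * e + v * h - q"
proof -
  obtain r s u v where
    "(p mod M, q mod M) = qt_combination M a b c (r, s) + qt_combination M d e h (u, v)"
    using assms by (auto simp: qt_span_def elim!: set_plus_elim)
  then have "p mod M = (r * a) mod M + (u * d) mod M"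
      and "q mod M = (r * b + s * c) mod M + (u * e + v * h) mod M"
    by (simp_all add: qt_combination_def)
  then have "(r * a + u * d) mod M = p mod M" "(r * b + s * c + (u * e + v * h)) mod M = q mod M"
    by (metis mod_add_eq mod_mod_trivial)+
  then have "M dvd r * a + u * d - p" "M dvd r * b + s * c + u * e + v * h - q"
    by (simp_all add: mod_eq_dvd_iff add.assoc)
  then show ?thesis
    using that by blast
qed

lemma one_less_card_UNIV: "1 < card (UNIV :: 'a::{finite,field} set)"
proof -
  have "card {0 :: 'a, 1} \<le> card (UNIV :: 'a set)"
    by (rule card_mono) simp_all
  then show ?thesis
    by simp
qed

lemma qt_span_plus_eq_iff_degree:
  fixes M a b c d e h :: "'a::{finite,field} poly"
  defines "V \<equiv> polys_below (degree M) \<times> polys_below (degree M)"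
  assumes "M \<noteq> 0" "a dvd M" "c dvd M" "a * c dvd M * b" "d dvd M" "h dvd M" "d * h dvd M * e"
    and "qt_span M a b c \<inter> qt_span M d e h = {0}"
  shows "qt_span M a b c + qt_span M d e h = V \<longleftrightarrow>
    degree a + degree c + degree d + degree h = 2 * degree M"
proof -
  define n where "n = degree M"
  define q where "q = card (UNIV :: 'a set)"
  have "degree a \<le> n" "degree c \<le> n" "degree d \<le> n" "degree h \<le> n"
    unfolding n_def using assms(2-7) dvd_imp_degree_le by blast+
  have "qt_span M a b c \<subseteq> V" "qt_span M d e h \<subseteq> V"
    unfolding V_def using qt_span_subset_polys_below[OF assms(2)] by blast+
  then have "qt_span M a b c + qt_span M d e h \<subseteq> V"
    unfolding V_def by (rule set_plus_subset_polys_below)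
  moreover have "finite V"
    by (simp add: V_def finite_polys_below)
  ultimately have "qt_span M a b c + qt_span M d e h = V \<longleftrightarrow>
      card (qt_span M a b c + qt_span M d e h) = card V"
    using card_subset_eq by blast
  also have "card (qt_span M a b c + qt_span M d e h) =
      card (qt_span M a b c) * card (qt_span M d e h)"
    using assms(9) diff_mem_qt_span by (intro card_set_plus_if_Int_zero) simp_all
  also have "\<dots> = q ^ ((n - degree a) + (n - degree c) + (n - degree d) + (n - degree h))"
    unfolding q_def n_def using card_qt_span[OF assms(2-5)] card_qt_span[OF assms(2,6-8)]
    by (simp add: power_add)
  also have "card V = q ^ (n + n)"
    by (simp add: V_def n_def q_def card_cartesian_product card_polys_below power_add)
  also have "q ^ ((n - degree a) + (n - degree c) + (n - degree d) + (n - degree h)) = q ^ (n + n) \<longleftrightarrow>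
      (n - degree a) + (n - degree c) + (n - degree d) + (n - degree h) = n + n"
    using one_less_card_UNIV unfolding q_def by (rule power_inject_exp)
  also have "\<dots> \<longleftrightarrow> degree a + degree c + degree d + degree h = 2 * degree M"
    using \<open>degree a \<le> n\<close> \<open>degree c \<le> n\<close> \<open>degree d \<le> n\<close> \<open>degree h \<le> n\<close> n_def by linarith
  finally show ?thesis .
qed

section \<open>The gcd conditions\<close>

lemma coprime_if_dvd_combination_minus_1:
  fixes M a d r u :: "'a::ring_gcd"
  assumes "a dvd M" "M dvd r * a + u * d - 1"
  shows "coprime a d"
proof (rule coprimeI)
  fix t
  assume "t dvd a" "t dvd d"
  then have "t dvd r * a + u * d"
    by simp
  moreover have "t dvd r * a + u * d - 1"
    using dvd_trans[OF \<open>t dvd a\<close> assms(1)] assms(2) by (rule dvd_trans)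
  ultimately have "t dvd (r * a + u * d) - (r * a + u * d - 1)"
    by (rule dvd_diff)
  then show "is_unit t"
    by simp
qed

lemma coprime_gcd_if_dvd_combinations:
  fixes M a b c d e h :: "'a::factorial_ring_gcd"
  assumes "squarefree M" "a dvd M" "a * c dvd M * b" "coprime a d"
    and "M dvd r * a + u * d" "M dvd r * b + s * c + u * e + v * h - 1"
  shows "coprime (gcd a c) h"
proof (rule coprimeI)
  fix t
  assume "t dvd gcd a c" "t dvd h"
  then have "t dvd a" "t dvd c"
    using dvd_trans gcd_dvd1 gcd_dvd2 by blast+
  from \<open>t dvd a\<close> assms(2) have "t dvd M"
    by (rule dvd_trans)
  have "t * t dvd M * b"
    using mult_dvd_mono[OF \<open>t dvd a\<close> \<open>t dvd c\<close>] assms(3) by (rule dvd_trans)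
  then have "t dvd b"
    using assms(1) \<open>t dvd M\<close> squarefree_dvd_cancel_square by blast
  have "t dvd u * d"
    using dvd_trans[OF \<open>t dvd M\<close> assms(5)] \<open>t dvd a\<close> by (simp add: dvd_add_right_iff)
  moreover have "coprime t d"
    using coprime_divisors[OF \<open>t dvd a\<close> dvd_refl assms(4)] .
  ultimately have "t dvd u"
    by (simp add: coprime_dvd_mult_left_iff)
  have "t dvd r * b + s * c + u * e + v * h"
    using \<open>t dvd b\<close> \<open>t dvd c\<close> \<open>t dvd u\<close> \<open>t dvd h\<close> by simp
  moreover have "t dvd r * b + s * c + u * e + v * h - 1"
    using \<open>t dvd M\<close> assms(6) by (rule dvd_trans)
  ultimately have "t dvd (r * b + s * c + u * e + v * h) - (r * b + s * c + u * e + v * h - 1)"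
    by (rule dvd_diff)
  then show "is_unit t"
    by simp
qed

lemma gcd_mult_lcm_eq_if_degree_sum:
  fixes M a c d h :: "'a::field_gcd poly"
  assumes "M \<noteq> 0" "normalize M = M" "a dvd M" "c dvd M" "d dvd M" "h dvd M"
    and "coprime (gcd a c) (d * h)" "coprime (gcd d h) (a * c)"
    and "degree a + degree c + degree d + degree h = 2 * degree M"
  shows "gcd a c * lcm d h = M"
proof -
  have "a \<noteq> 0" "c \<noteq> 0" "d \<noteq> 0" "h \<noteq> 0"
    using assms(1,3-6) dvd_0_left by blast+
  have "lcm d h dvd d * h" "lcm a c dvd a * c"
    by (simp_all add: lcm_least)
  then have "coprime (gcd a c) (lcm d h)" "coprime (gcd d h) (lcm a c)"
    using coprime_divisors[OF dvd_refl _ assms(7)] coprime_divisors[OF dvd_refl _ assms(8)]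
    by simp_all
  moreover have "gcd a c dvd M" "gcd d h dvd M" "lcm d h dvd M" "lcm a c dvd M"
    using assms(3-6) dvd_trans[OF gcd_dvd1] by simp_all
  ultimately have dvd: "gcd a c * lcm d h dvd M" "gcd d h * lcm a c dvd M"
    by (simp_all add: divides_mult)
  have nonzero: "gcd a c \<noteq> 0" "lcm d h \<noteq> 0" "gcd d h \<noteq> 0" "lcm a c \<noteq> 0"
    using \<open>a \<noteq> 0\<close> \<open>c \<noteq> 0\<close> \<open>d \<noteq> 0\<close> \<open>h \<noteq> 0\<close> by (simp_all add: lcm_eq_0_iff)
  have "degree (gcd a c * lcm d h) \<le> degree M" "degree (gcd d h * lcm a c) \<le> degree M"
    using dvd assms(1) by (simp_all add: dvd_imp_degree_le)
  moreover have "degree (gcd a c * lcm d h) + degree (gcd d h * lcm a c) =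
      (degree (gcd a c) + degree (lcm a c)) + (degree (gcd d h) + degree (lcm d h))"
    using nonzero by (simp add: degree_mult_eq)
  moreover have "\<dots> = 2 * degree M"
    using assms(9) \<open>a \<noteq> 0\<close> \<open>c \<noteq> 0\<close> \<open>d \<noteq> 0\<close> \<open>h \<noteq> 0\<close> by (simp add: degree_gcd_add_degree_lcm)
  ultimately have "degree (gcd a c * lcm d h) = degree M"
    by linarith
  then show ?thesis
    using normalized_eq_if_dvd_degree_eq[OF dvd(1) assms(1)] assms(2) by (simp add: normalize_mult)
qed

lemma common_combination_if_gcd_dvd:
  fixes a b c d e h N :: "'a::euclidean_ring_gcd"
  assumes "gcd c h dvd N * (a * e - b * d)"
  obtains s v where "(d * N) * b + s * c = (a * N) * e + v * h"
proof -
  obtain z where z: "N * (a * e - b * d) = gcd c h * z"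
    using assms by blast
  define s0 where "s0 = fst (bezout_coefficients c h)"
  define v0 where "v0 = snd (bezout_coefficients c h)"
  have bezout: "s0 * c + v0 * h = gcd c h"
    unfolding s0_def v0_def by (rule bezout_coefficients_fst_snd)
  have "(d * N) * b + (s0 * z) * c - ((a * N) * e + (- (v0 * z)) * h) =
      z * (s0 * c + v0 * h) - N * (a * e - b * d)"
    by (simp add: algebra_simps)
  also have "\<dots> = 0"
    using bezout z by (simp add: ac_simps)
  finally show thesis
    using that[of "s0 * z" "- (v0 * z)"] by simp
qed

lemma gcd_cofactors_eq_1_if_trivial_intersection:
  fixes M a b c d e h :: "'a::euclidean_ring_gcd"
  assumes "squarefree M" "c dvd M" "h dvd M"
    and trivial: "\<And>r s u v. r * a = u * d \<Longrightarrow> r * b + s * c = u * e + v * h \<Longrightarrow> M dvd r * a"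
  shows "gcd (c div gcd a c) (gcd (h div gcd d h) (a * e - b * d)) = 1"
proof -
  define t where "t = gcd (c div gcd a c) (gcd (h div gcd d h) (a * e - b * d))"
  have t: "t dvd c div gcd a c" "t dvd h div gcd d h" "t dvd a * e - b * d"
    unfolding t_def by (auto intro: dvd_trans)
  have "coprime t a" "coprime t d"
    using coprime_divisors[OF t(1) dvd_refl coprime_div_gcd_if_squarefree[OF assms(1,2)]]
      coprime_divisors[OF t(2) dvd_refl coprime_div_gcd_if_squarefree[OF assms(1,3)]] .
  have "c div gcd a c dvd c"
    by (metis dvd_mult dvd_mult_div_cancel dvd_refl gcd_dvd2)
  with t(1) assms(2) have "t dvd M"
    by (meson dvd_trans)
  define N where "N = M div t"
  have M: "M = t * N"
    unfolding N_def using \<open>t dvd M\<close> by simp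
  then have "N \<noteq> 0"
    using assms(1) by auto
  obtain w where "a * e - b * d = t * w"
    using t(3) by blast
  then have "N * (a * e - b * d) = M * w"
    using M by (simp add: ac_simps)
  moreover have "gcd c h dvd M"
    using assms(2) by (meson dvd_trans gcd_dvd1)
  ultimately have "gcd c h dvd N * (a * e - b * d)"
    by simp
  then obtain s v where "(d * N) * b + s * c = (a * N) * e + v * h"
    by (rule common_combination_if_gcd_dvd)
  moreover have "(d * N) * a = (a * N) * d"
    by (simp add: ac_simps)
  ultimately have "M dvd (d * N) * a"
    using trivial by blast
  then have "t * N dvd (a * d) * N"
    unfolding M by (simp only: ac_simps)
  then have "t dvd a * d"
    using \<open>N \<noteq> 0\<close> by simp
  moreover have "coprime t (a * d)"
    using \<open>coprime t a\<close> \<open>coprime t d\<close> by simp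
  ultimately have "is_unit t"
    using coprime_common_divisor[OF _ dvd_refl] by blast
  then show ?thesis
    unfolding t_def by simp
qed

lemma prime_dvd_lcm_iff:
  fixes p d h :: "'a::factorial_semiring_gcd"
  assumes "prime p"
  shows "p dvd lcm d h \<longleftrightarrow> p dvd d \<or> p dvd h"
proof
  assume "p dvd lcm d h"
  moreover have "lcm d h dvd d * h"
    by (simp add: lcm_least)
  ultimately have "p dvd d * h"
    by (rule dvd_trans)
  then show "p dvd d \<or> p dvd h"
    using assms by (simp add: prime_dvd_mult_iff)
qed (meson dvd_lcm1 dvd_lcm2 dvd_trans)

lemma prime_dvd_gcd_iff_not_dvd_lcm:
  fixes M a c d h p :: "'a::factorial_semiring_gcd"
  assumes "squarefree M" "gcd a c * lcm d h = M" "prime p" "p dvd M"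
  shows "p dvd a \<and> p dvd c \<longleftrightarrow> \<not> (p dvd d \<or> p dvd h)"
proof -
  have "p dvd gcd a c * lcm d h"
    using assms(2,4) by simp
  then have "p dvd gcd a c \<or> p dvd lcm d h"
    using assms(3) prime_dvd_mult_iff by blast
  moreover have "\<not> (p dvd gcd a c \<and> p dvd lcm d h)"
  proof
    assume "p dvd gcd a c \<and> p dvd lcm d h"
    then have "p * p dvd gcd a c * lcm d h"
      using mult_dvd_mono by blast
    then have "p * p dvd M * 1"
      using assms(2) by simp
    then have "p dvd 1"
      using assms(1,4) squarefree_dvd_cancel_square by blast
    then show False
      using assms(3) by simp
  qed
  ultimately show ?thesis
    using prime_dvd_lcm_iff[OF assms(3)] by auto
qed

lemma prime_dvd_div_gcd:
  fixes a c p :: "'a::factorial_semiring_gcd"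
  assumes "prime p" "p dvd c" "\<not> p dvd a"
  shows "p dvd c div gcd a c"
proof -
  have "p dvd gcd a c * (c div gcd a c)"
    using assms(2) by simp
  moreover have "\<not> p dvd gcd a c"
    using assms(3) dvd_trans gcd_dvd1 by blast
  ultimately show ?thesis
    using assms(1) prime_dvd_mult_iff by blast
qed

lemma prime_dvd_common_combination:
  fixes p a b c d e h r s u v :: "'a::factorial_ring_gcd"
  assumes p: "prime p"
    and I: "\<not> (p dvd a \<and> p dvd d)"
    and II: "p dvd a \<and> p dvd c \<longleftrightarrow> \<not> (p dvd d \<or> p dvd h)"
    and III: "p dvd d \<and> p dvd h \<longleftrightarrow> \<not> (p dvd a \<or> p dvd c)"
    and IV: "p dvd c \<Longrightarrow> \<not> p dvd a \<Longrightarrow> p dvd h \<Longrightarrow> \<not> p dvd d \<Longrightarrow> \<not> p dvd a * e - b * d"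
    and b: "p dvd a \<Longrightarrow> p dvd c \<Longrightarrow> p dvd b"
    and e: "p dvd d \<Longrightarrow> p dvd h \<Longrightarrow> p dvd e"
    and eq: "r * a = u * d" "r * b + s * c = u * e + v * h"
  shows "p dvd r * a \<and> p dvd r * b + s * c"
proof (cases "p dvd a"; cases "p dvd c")
  assume "p dvd a" "p dvd c"
  then show ?thesis
    using b by simp
next
  assume "p dvd a" "\<not> p dvd c"
  then have "\<not> p dvd d" "p dvd h"
    using I II by auto
  have "p dvd u * d"
    using \<open>p dvd a\<close> eq(1) by (metis dvd_mult)
  then have "p dvd u"
    using \<open>\<not> p dvd d\<close> p by (simp add: prime_dvd_mult_iff)
  then have "p dvd r * b + s * c"
    using \<open>p dvd h\<close> eq(2) by simp
  then show ?thesis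
    using \<open>p dvd a\<close> by simp
next
  assume "\<not> p dvd a" "p dvd c"
  show ?thesis
  proof (cases "p dvd d")
    case True
    then have "p dvd r * a"
      using eq(1) by simp
    then have "p dvd r"
      using \<open>\<not> p dvd a\<close> p by (simp add: prime_dvd_mult_iff)
    then show ?thesis
      using \<open>p dvd c\<close> by simp
  next
    case False
    then have "p dvd h"
      using II \<open>\<not> p dvd a\<close> by auto
    have "r * b - u * e = v * h - s * c"
      using eq(2) by (simp add: algebra_simps)
    then have "p dvd r * b - u * e"
      using \<open>p dvd h\<close> \<open>p dvd c\<close> by simp
    then have "p dvd d * (r * b - u * e)"
      by simp
    moreover have "d * (r * b - u * e) = - (r * (a * e - b * d))"
      using eq(1) by (simp add: algebra_simps)
    ultimately have "p dvd r * (a * e - b * d)"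
      by simp
    then have "p dvd r"
      using IV[OF \<open>p dvd c\<close> \<open>\<not> p dvd a\<close> \<open>p dvd h\<close> False] p by (simp add: prime_dvd_mult_iff)
    then show ?thesis
      using \<open>p dvd c\<close> by simp
  qed
next
  assume "\<not> p dvd a" "\<not> p dvd c"
  then have "p dvd d" "p dvd h" "p dvd e"
    using III e by auto
  then show ?thesis
    using eq by simp
qed

lemma dvd_common_combination:
  fixes M a b c d e h :: "'a::factorial_ring_gcd"
  assumes sq: "squarefree M" and "a * c dvd M * b" "d * h dvd M * e"
    and I: "gcd d a = 1" and II: "gcd a c * lcm d h = M" and III: "gcd d h * lcm a c = M"
    and IV: "gcd (c div gcd a c) (gcd (h div gcd d h) (a * e - b * d)) = 1"
    and eq: "r * a = u * d" "r * b + s * c = u * e + v * h"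
  shows "M dvd r * a \<and> M dvd r * b + s * c"
proof -
  have "p dvd r * a \<and> p dvd r * b + s * c" if p: "prime p" and "p dvd M" for p
  proof (rule prime_dvd_common_combination[OF p _ _ _ _ _ _ eq])
    show "\<not> (p dvd a \<and> p dvd d)"
      using I p by (metis gcd_greatest is_unit_gcd not_prime_unit)
    show "p dvd a \<and> p dvd c \<longleftrightarrow> \<not> (p dvd d \<or> p dvd h)"
      using prime_dvd_gcd_iff_not_dvd_lcm[OF sq II p \<open>p dvd M\<close>] .
    show "p dvd d \<and> p dvd h \<longleftrightarrow> \<not> (p dvd a \<or> p dvd c)"
      using prime_dvd_gcd_iff_not_dvd_lcm[OF sq III p \<open>p dvd M\<close>] .
    show "p dvd b" if "p dvd a" "p dvd c"
      using mult_dvd_mono[OF that] assms(2) sq \<open>p dvd M\<close> squarefree_dvd_cancel_square dvd_trans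
      by blast
    show "p dvd e" if "p dvd d" "p dvd h"
      using mult_dvd_mono[OF that] assms(3) sq \<open>p dvd M\<close> squarefree_dvd_cancel_square dvd_trans
      by blast
    show "\<not> p dvd a * e - b * d" if "p dvd c" "\<not> p dvd a" "p dvd h" "\<not> p dvd d"
    proof
      assume "p dvd a * e - b * d"
      moreover have "p dvd c div gcd a c" "p dvd h div gcd d h"
        using prime_dvd_div_gcd[OF p] that by blast+
      ultimately have "p dvd gcd (c div gcd a c) (gcd (h div gcd d h) (a * e - b * d))"
        by simp
      then show False
        using IV p by simp
    qed
  qed
  then show ?thesis
    using squarefree_dvdI_primes[OF sq] by blast
qed

lemma degree_sum_eq_if_gcd_mult_lcm_eq:
  fixes M a c d h :: "'a::field_gcd poly"
  assumes "a \<noteq> 0" "c \<noteq> 0" "d \<noteq> 0" "h \<noteq> 0"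
    and "gcd a c * lcm d h = M" "gcd d h * lcm a c = M"
  shows "degree a + degree c + degree d + degree h = 2 * degree M"
proof -
  have "gcd a c \<noteq> 0" "gcd d h \<noteq> 0" "lcm a c \<noteq> 0" "lcm d h \<noteq> 0"
    using assms(1-4) by (simp_all add: lcm_eq_0_iff)
  then have "degree (gcd a c) + degree (lcm d h) = degree M"
    and "degree (gcd d h) + degree (lcm a c) = degree M"
    using assms(5,6) by (metis degree_mult_eq)+
  moreover have "degree (gcd a c) + degree (lcm a c) = degree a + degree c"
      "degree (gcd d h) + degree (lcm d h) = degree d + degree h"
    using assms(1-4) by (simp_all add: degree_gcd_add_degree_lcm)
  ultimately show ?thesis
    by linarith
qed

lemma coprime_conditions_if_qt_span_plus_eq:
  fixes M a b c d e h :: "'a::field_gcd poly"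
  assumes sq: "squarefree M" and "a dvd M" "a * c dvd M * b" "d dvd M" "d * h dvd M * e"
    and span: "qt_span M a b c + qt_span M d e h = polys_below (degree M) \<times> polys_below (degree M)"
  shows "coprime a d" "coprime (gcd a c) (d * h)" "coprime (gcd d h) (a * c)"
proof -
  have "M \<noteq> 0"
    using sq by auto
  then have "(1 mod M, 0 mod M) \<in> qt_span M a b c + qt_span M d e h"
    and "(0 mod M, 1 mod M) \<in> qt_span M a b c + qt_span M d e h"
    unfolding span by (simp_all add: mod_mem_polys_below)
  then obtain r s u v r' s' u' v' where one: "M dvd r * a + u * d - 1"
    and zero': "M dvd r' * a + u' * d" and one': "M dvd r' * b + s' * c + u' * e + v' * h - 1"
    by (metis mem_qt_span_plus_qt_spanE diff_zero)
  show "coprime a d"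
    using assms(2) one by (rule coprime_if_dvd_combination_minus_1)
  then have "coprime d a"
    by (simp add: coprime_commute)
  have "coprime (gcd a c) h"
    using sq assms(2,3) \<open>coprime a d\<close> zero' one' by (rule coprime_gcd_if_dvd_combinations)
  moreover have "coprime (gcd a c) d"
    using coprime_divisors[OF gcd_dvd1 dvd_refl \<open>coprime a d\<close>] .
  ultimately show "coprime (gcd a c) (d * h)"
    by simp
  have "M dvd u' * d + r' * a" "M dvd u' * e + v' * h + r' * b + s' * c - 1"
    using zero' one' by (simp_all add: ac_simps)
  then have "coprime (gcd d h) c"
    using coprime_gcd_if_dvd_combinations[OF sq assms(4,5) \<open>coprime d a\<close>] by blast
  moreover have "coprime (gcd d h) a"
    using coprime_divisors[OF gcd_dvd1 dvd_refl \<open>coprime d a\<close>] .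
  ultimately show "coprime (gcd d h) (a * c)"
    by simp
qed

lemma qt_spans_complementary_iff:
  fixes M a b c d e h :: "'a::{finite,field_gcd} poly"
  defines "V \<equiv> polys_below (degree M) \<times> polys_below (degree M)"
  assumes sq: "squarefree M" and "normalize M = M"
    and "a dvd M" "c dvd M" "a * c dvd M * b" "d dvd M" "h dvd M" "d * h dvd M * e"
  shows "qt_span M a b c \<inter> qt_span M d e h = {0} \<and> qt_span M a b c + qt_span M d e h = V \<longleftrightarrow>
    gcd d a = 1 \<and> gcd a c = M div lcm d h \<and> gcd d h = M div lcm a c \<and>
    gcd (c div gcd a c) (gcd (h div gcd d h) (a * e - b * d)) = 1"
    (is "?complementary \<longleftrightarrow> ?conditions")
proof -
  have "M \<noteq> 0"
    using sq by auto
  then have "a \<noteq> 0" "c \<noteq> 0" "d \<noteq> 0" "h \<noteq> 0" "lcm a c \<noteq> 0" "lcm d h \<noteq> 0"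
    using assms(4,5,7,8) by (auto simp: lcm_eq_0_iff)
  note Int_iff = qt_span_Int_eq_0_iff[OF \<open>M \<noteq> 0\<close> assms(7-9), of a b c]
  note span_iff = qt_span_plus_eq_iff_degree[OF \<open>M \<noteq> 0\<close> assms(4-9), folded V_def]
  show ?thesis
  proof
    assume ?complementary
    then have Int: "qt_span M a b c \<inter> qt_span M d e h = {0}"
      and span: "qt_span M a b c + qt_span M d e h = V"
      by simp_all
    have "degree a + degree c + degree d + degree h = 2 * degree M"
      using span span_iff Int by simp
    then have "gcd a c * lcm d h = M" "gcd d h * lcm a c = M"
      using coprime_conditions_if_qt_span_plus_eq[OF sq assms(4,6,7,9) span[unfolded V_def]]
        gcd_mult_lcm_eq_if_degree_sum[OF \<open>M \<noteq> 0\<close> assms(3) assms(4,5,7,8)]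
        gcd_mult_lcm_eq_if_degree_sum[OF \<open>M \<noteq> 0\<close> assms(3) assms(7,8,4,5)]
      by (simp_all add: ac_simps)
    moreover have "M dvd r * a" if "r * a = u * d" "r * b + s * c = u * e + v * h" for r s u v
      using Int Int_iff that by simp
    then have "gcd (c div gcd a c) (gcd (h div gcd d h) (a * e - b * d)) = 1"
      by (rule gcd_cofactors_eq_1_if_trivial_intersection[OF sq assms(5,8)])
    moreover have "gcd d a = 1"
      using coprime_conditions_if_qt_span_plus_eq(1)[OF sq assms(4,6,7,9) span[unfolded V_def]]
      by (metis coprime_commute coprime_iff_gcd_eq_1)
    ultimately show ?conditions
      using \<open>lcm a c \<noteq> 0\<close> \<open>lcm d h \<noteq> 0\<close> by (metis nonzero_mult_div_cancel_right)
  next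
    assume conditions: ?conditions
    then have I: "gcd d a = 1"
      and IV: "gcd (c div gcd a c) (gcd (h div gcd d h) (a * e - b * d)) = 1"
      by blast+
    have gcd_lcm: "gcd a c * lcm d h = M" "gcd d h * lcm a c = M"
      using conditions assms(4,5,7,8) by simp_all
    have "M dvd r * a \<and> M dvd r * b + s * c"
      if "r * a = u * d" "r * b + s * c = u * e + v * h" for r s u v
      using dvd_common_combination[OF sq assms(6,9) I gcd_lcm IV that] .
    then have "qt_span M a b c \<inter> qt_span M d e h = {0}"
      using Int_iff by simp
    moreover have "degree a + degree c + degree d + degree h = 2 * degree M"
      using \<open>a \<noteq> 0\<close> \<open>c \<noteq> 0\<close> \<open>d \<noteq> 0\<close> \<open>h \<noteq> 0\<close> gcd_lcm
      by (rule degree_sum_eq_if_gcd_mult_lcm_eq)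
    ultimately show ?complementary
      using span_iff by simp
  qed
qed

theorem theorem5p3:
  fixes lam :: "'a::{finite,field_gcd}"
    and m :: nat
    and g11 g12 g22 f11 f12 f22 :: "'a poly"
  assumes m_pos: "m > 0"
    and coprime_mq: "coprime m (card (UNIV :: 'a set))"
    and lam_nz: "lam \<noteq> 0"
    and hg11: "g11 dvd xml m lam" and hg22: "g22 dvd xml m lam"
    and hg12: "g12 = 0 \<or> degree g12 < degree g22"
    and hg: "g11 * g22 dvd xml m lam * g12"
    and hf11: "f11 dvd xml m lam" and hf22: "f22 dvd xml m lam"
    and hf12: "f12 = 0 \<or> degree f12 < degree f22"
    and hf: "f11 * f22 dvd xml m lam * f12"
  shows "is_LCP (2*m) (qt_code m lam g11 g12 g22) (qt_code m lam f11 f12 f22) \<longleftrightarrow>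
    (let g = gcd g11 g22; f = gcd f11 f22; g22' = g22 div g; f22' = f22 div f in
      gcd f11 g11 = 1 \<and>
      g = xml m lam div lcm f11 f22 \<and>
      f = xml m lam div lcm g11 g22 \<and>
      gcd g22' (gcd f22' (g11 * f12 - g12 * f11)) = 1)"
proof -
  \<comment> \<open>The degree bounds hg12 and hf12 only normalise the generators.\<close>
  define M where "M = xml m lam"
  have "M \<noteq> 0" "normalize M = M" "degree M = m"
    unfolding M_def using m_pos by (simp_all add: xml_neq_0 normalize_xml degree_xml)
  have "squarefree M"
    unfolding M_def using m_pos of_nat_neq_0_if_coprime_card[OF coprime_mq] lam_nz
    by (rule squarefree_xml)
  have "qt_span M g11 g12 g22 \<subseteq> polys_below m \<times> polys_below m"
    "qt_span M f11 f12 f22 \<subseteq> polys_below m \<times> polys_below m"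
    using qt_span_subset_polys_below[OF \<open>M \<noteq> 0\<close>] \<open>degree M = m\<close> by blast+
  then have "is_LCP (2*m) (qt_code m lam g11 g12 g22) (qt_code m lam f11 f12 f22) \<longleftrightarrow>
      qt_span M g11 g12 g22 \<inter> qt_span M f11 f12 f22 = {0} \<and>
      qt_span M g11 g12 g22 + qt_span M f11 f12 f22 = polys_below m \<times> polys_below m"
    unfolding qt_code_def qt_module_eq_qt_span M_def[symmetric] by (rule is_LCP_to_vec_iff)
  also have "\<dots> \<longleftrightarrow>
      gcd f11 g11 = 1 \<and> gcd g11 g22 = M div lcm f11 f22 \<and> gcd f11 f22 = M div lcm g11 g22 \<and>
      gcd (g22 div gcd g11 g22) (gcd (f22 div gcd f11 f22) (g11 * f12 - g12 * f11)) = 1"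
    using qt_spans_complementary_iff[OF \<open>squarefree M\<close> \<open>normalize M = M\<close>,
        of g11 g22 g12 f11 f22 f12]
      hg11 hg22 hg hf11 hf22 hf \<open>degree M = m\<close>
    unfolding M_def by simp
  finally show ?thesis
    unfolding M_def Let_def .
qed

end
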